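(* For integers $r\geq1$, $p\geq2$, $k_1\geq2$ and $k_2,\ldots,k_r\geq1$, \[ \lim_{m\to\infty}\zeta^{\star}(k_1,\ldots,k_r,\{p\}^m)=\zeta^{\star}(k_1,\ldots,k_{r-1})+\sum_{n_1\geq\cdots\geq n_r\geq2}\frac{1}{n_1^{k_1}\cdots n_r^{k_r}}\prod_{l=2}^{n_r}\frac{l^p}{l^p-1}. \]
   Context: $\zeta^{\star}(k_1,\ldots,k_r)=\sum_{n_1\geq\cdots\geq n_r\geq 1}\frac{1}{n_1^{k_1}\cdots n_r^{k_r}}$ for $k_1\geq2$, $k_2,\ldots,k_r\geq1$; $\{p\}^m$ denotes $m$ consecutive arguments equal to $p$. For $r=1$, $\zeta^{\star}(k_1,\ldots,k_{r-1})$ is the empty value, interpreted as $1$. *)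

theory Defs
  imports "HOL-Analysis.Analysis"
begin

definition dec_tuples :: "nat \<Rightarrow> nat \<Rightarrow> nat list set" where
  "dec_tuples r b = {ns. length ns = r \<and> sorted_wrt (\<ge>) ns \<and> (\<forall>n\<in>set ns. b \<le> n)}"

definition zeta_term :: "nat list \<Rightarrow> nat list \<Rightarrow> real" where
  "zeta_term ks ns = (\<Prod>i<length ks. 1 / real (ns ! i) ^ (ks ! i))"

text \<open>Multiple zeta-star value; for the empty list it equals 1 (index set is {[]}).\<close>
definition zeta_star :: "nat list \<Rightarrow> real" where
  "zeta_star ks = (\<Sum>\<^sub>\<infinity> ns \<in> dec_tuples (length ks) 1. zeta_term ks ns)"

end

theory Submission
  imports Defs
begin

text \<open>
  Cut a tuple of length \<open>r + m\<close> after its first \<open>r\<close> entries \<open>a\<close>; the remaining \<open>m\<close> entries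
  form a decreasing tuple bounded by \<open>N = last a\<close>. Summing over them gives the truncated value
  \<open>H m N = trunc_zeta_star p m N\<close> of \<open>\<zeta>\<^sup>\<star>({p}\<^sup>m)\<close>, which obeys
  \<open>H (m+1) N = H (m+1) (N-1) + H m N / N\<^sup>p\<close>. Hence, by induction on \<open>N\<close>, \<open>H m N\<close> increases
  with \<open>m\<close> to \<open>\<Prod>l=2..N. l\<^sup>p/(l\<^sup>p-1)\<close>, which for \<open>p \<ge> 2\<close> is at most
  \<open>\<Prod>l=2..N. l\<^sup>2/(l\<^sup>2-1) = 2N/(N+1) < 2\<close>. Dominated convergence moves the limit inside the
  sum over \<open>a\<close>; the tuples \<open>a\<close> ending in 1 then contribute \<open>\<zeta>\<^sup>\<star>(k\<^sub>1,\<dots>,k\<^sub>r\<^sub>-\<^sub>1)\<close>, the others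
  the second term. The multiple zeta-star series itself converges because, for
  \<open>n\<^sub>1 \<ge> \<dots> \<ge> n\<^sub>r \<ge> 1\<close> and \<open>t = 1/r\<close>, its term is at most
  \<open>n\<^sub>1\<^sup>-\<^sup>2 \<Prod>i\<ge>2. n\<^sub>1\<^sup>t n\<^sub>i\<^sup>-\<^sup>1\<^sup>-\<^sup>t = \<Prod>i. n\<^sub>i\<^sup>-\<^sup>1\<^sup>-\<^sup>t\<close>.
\<close>

lemma last_le_of_sorted_wrt_ge:
  "sorted_wrt (\<ge>) xs \<Longrightarrow> x \<in> set xs \<Longrightarrow> last xs \<le> (x::'a::linorder)"
  by (induction xs) auto

lemma summable_on_prod_list_lists:
  fixes f :: "'a \<Rightarrow> real"
  assumes "\<And>x. f x \<ge> 0" "f summable_on A"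
  shows "(\<lambda>xs. prod_list (map f xs)) summable_on {xs. length xs = r \<and> set xs \<subseteq> A}"
proof (induction r)
  case 0
  have "{xs. length xs = 0 \<and> set xs \<subseteq> A} = {[]}" by auto
  then show ?case by simp
next
  case (Suc r)
  define L where "L = {xs. length xs = r \<and> set xs \<subseteq> A}"
  have lists_Suc: "{xs. length xs = Suc r \<and> set xs \<subseteq> A} = (\<lambda>(x, xs). x # xs) ` (A \<times> L)"
    unfolding L_def by (auto simp: length_Suc_conv)
  have "(\<lambda>(x, xs). f x * prod_list (map f xs)) summable_on A \<times> L"
  proof (rule summable_on_SigmaI[where g = "\<lambda>x. f x * infsum (\<lambda>xs. prod_list (map f xs)) L"])
    show "((\<lambda>xs. case (x, xs) of (y, ys) \<Rightarrow> f y * prod_list (map f ys))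
        has_sum f x * infsum (\<lambda>xs. prod_list (map f xs)) L) L" for x
      using Suc.IH unfolding L_def by (auto intro!: has_sum_cmult_right)
    show "(\<lambda>x. f x * infsum (\<lambda>xs. prod_list (map f xs)) L) summable_on A"
      using assms(2) by (rule summable_on_cmult_left)
  qed (auto simp: assms(1) intro!: mult_nonneg_nonneg prod_list_nonneg)
  moreover have "inj_on (\<lambda>(x, xs). x # xs) (A \<times> L)"
    by (auto simp: inj_on_def)
  ultimately show ?case
    unfolding lists_Suc by (subst summable_on_reindex) (auto simp: o_def case_prod_unfold)
qed

lemma tendsto_infsum_dominated:
  fixes f :: "nat \<Rightarrow> 'a \<Rightarrow> real"
  assumes "g summable_on A"
    and "\<And>m x. x \<in> A \<Longrightarrow> \<bar>f m x\<bar> \<le> g x"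
    and "\<And>x. x \<in> A \<Longrightarrow> (\<lambda>m. f m x) \<longlonglongrightarrow> h x"
  shows "(\<lambda>m. infsum (f m) A) \<longlonglongrightarrow> infsum h A"
proof -
  have g_nonneg: "x \<in> A \<Longrightarrow> 0 \<le> g x" for x
    using assms(2)[of x 0] by linarith
  have h_le: "\<bar>h x\<bar> \<le> g x" if "x \<in> A" for x
    using tendsto_rabs[OF assms(3)[OF that]] assms(2)[OF that] by (intro LIMSEQ_le_const2) auto
  have "(\<lambda>x. norm (g x)) summable_on A"
    using assms(1) summable_on_cong[of A "\<lambda>x. norm (g x)" g] g_nonneg by simp
  then have "integrable (count_space A) g"
    using abs_summable_equivalent[of g A] by (simp add: abs_summable_on_def)
  then have "(\<lambda>m. integral\<^sup>L (count_space A) (f m)) \<longlonglongrightarrow> integral\<^sup>L (count_space A) h"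
    by (intro integral_dominated_convergence[where w = g] AE_I2) (auto simp: assms(2,3))
  moreover have "infsum u A = integral\<^sup>L (count_space A) u" if "\<And>x. x \<in> A \<Longrightarrow> \<bar>u x\<bar> \<le> g x" for u
  proof -
    have "(\<lambda>x. norm (u x)) summable_on A"
      by (rule summable_on_comparison_test[OF assms(1)]) (auto simp: that)
    then show ?thesis
      using abs_summable_equivalent[of u A] infsetsum_infsum[of u A] by (simp add: infsetsum_def)
  qed
  ultimately show ?thesis
    using assms(2) h_le by simp
qed

lemma zeta_term_Nil [simp]: "zeta_term [] ns = 1"
  by (simp add: zeta_term_def)

lemma zeta_term_Cons [simp]: "zeta_term (k # ks) (n # ns) = 1 / real n ^ k * zeta_term ks ns"
  by (simp add: zeta_term_def prod.lessThan_Suc_shift del: prod.lessThan_Suc)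

lemma zeta_term_append:
  "length ks = length ns \<Longrightarrow> zeta_term (ks @ ks') (ns @ ns') = zeta_term ks ns * zeta_term ks' ns'"
proof (induction ks arbitrary: ns)
  case (Cons k ks)
  then show ?case by (cases ns) auto
qed simp

lemma zeta_term_nonneg: "0 \<le> zeta_term ks ns"
  by (simp add: zeta_term_def prod_nonneg)

lemma last_dec_tuples_ge: "ns \<in> dec_tuples r b \<Longrightarrow> r \<ge> 1 \<Longrightarrow> last ns \<ge> b"
  by (cases ns) (auto simp: dec_tuples_def)

subsection \<open>Summability of the multiple zeta-star series\<close>

lemma inverse_power_le_powr:
  assumes "1 \<le> n" "n \<le> M" "1 \<le> k" "0 \<le> t"
  shows "1 / real n ^ k \<le> real M powr t * real n powr -(1 + t)"
proof -
  have "1 / real n ^ k \<le> 1 / real n"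
    using assms power_increasing[of 1 k "real n"] by (simp add: frac_le)
  also have "\<dots> = real n powr t * real n powr -(1 + t)"
    using assms by (simp add: powr_minus_divide flip: powr_add)
  also have "\<dots> \<le> real M powr t * real n powr -(1 + t)"
    using assms by (intro mult_right_mono powr_mono2) auto
  finally show ?thesis .
qed

lemma zeta_term_le_powr_prod:
  fixes t :: real
  assumes "\<forall>k\<in>set ks. k \<ge> 1" "\<forall>n\<in>set ns. 1 \<le> n \<and> n \<le> M" "length ks = length ns"
    and "1 \<le> M" "0 \<le> t"
  shows "zeta_term ks ns \<le> real M powr (t * length ns) * (\<Prod>n\<leftarrow>ns. real n powr -(1 + t))"
  using assms(1-3)
proof (induction ks arbitrary: ns)
  case (Cons k ks)
  then obtain n ns' where ns: "ns = n # ns'" by (cases ns) auto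
  have "zeta_term (k # ks) ns = 1 / real n ^ k * zeta_term ks ns'"
    by (simp add: ns)
  also have "\<dots> \<le> (real M powr t * real n powr -(1 + t))
      * (real M powr (t * length ns') * (\<Prod>n\<leftarrow>ns'. real n powr -(1 + t)))"
    using Cons ns assms(5)
    by (intro mult_mono inverse_power_le_powr) (auto intro: zeta_term_nonneg)
  also have "\<dots> = real M powr (t * length ns) * (\<Prod>n\<leftarrow>ns. real n powr -(1 + t))"
    by (simp add: ns distrib_left powr_add)
  finally show ?case .
qed (use assms(4) in simp)

lemma zeta_term_le_powr_prod_dec_tuples:
  assumes "ks \<noteq> []" "hd ks \<ge> 2" "\<forall>k\<in>set ks. k \<ge> 1" "ns \<in> dec_tuples (length ks) 1"
  shows "zeta_term ks ns \<le> (\<Prod>n\<leftarrow>ns. real n powr -(1 + 1 / length ks))"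
proof -
  obtain k ks' where ks: "ks = k # ks'" using assms(1) by (cases ks) auto
  obtain n ns' where ns: "ns = n # ns'" using assms(4) ks by (cases ns) (auto simp: dec_tuples_def)
  define t where "t = 1 / real (length ks)"
  have n: "n \<ge> 1" "\<forall>n'\<in>set ns'. 1 \<le> n' \<and> n' \<le> n" "length ks' = length ns'"
    using assms(4) ks ns by (auto simp: dec_tuples_def)
  have t: "0 \<le> t" "t * length ns' = 1 - t"
    using n(3) by (auto simp: t_def ks field_simps)
  have "1 / real n ^ k \<le> 1 / real n ^ 2"
    using assms(2) ks n power_increasing[of 2 k "real n"] by (simp add: frac_le)
  also have "\<dots> = real n powr -2"
    using n by (simp add: powr_minus powr_realpow divide_inverse)
  finally have head: "1 / real n ^ k \<le> real n powr -2" .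
  have tail: "zeta_term ks' ns' \<le> real n powr (1 - t) * (\<Prod>n\<leftarrow>ns'. real n powr -(1 + t))"
    using zeta_term_le_powr_prod[of ks' ns' n t] assms(3) ks n t by simp
  have "zeta_term ks ns = 1 / real n ^ k * zeta_term ks' ns'"
    by (simp add: ks ns)
  also have "\<dots> \<le> real n powr -2 * (real n powr (1 - t) * (\<Prod>n\<leftarrow>ns'. real n powr -(1 + t)))"
    by (intro mult_mono head tail) (auto intro: zeta_term_nonneg)
  also have "\<dots> = (\<Prod>n\<leftarrow>ns. real n powr -(1 + t))"
    using n by (simp add: ns flip: powr_add)
  finally show ?thesis by (simp add: t_def)
qed

lemma summable_on_zeta_term:
  assumes "ks \<noteq> []" "hd ks \<ge> 2" "\<forall>k\<in>set ks. k \<ge> 1"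
  shows "zeta_term ks summable_on dec_tuples (length ks) 1"
proof -
  define s where "s = 1 + 1 / real (length ks)"
  have "(\<lambda>n::nat. real n powr -s) summable_on UNIV"
    using assms(1) by (subst summable_on_UNIV_nonneg_real_iff) (auto simp: s_def summable_real_powr_iff)
  then have "(\<lambda>ns. \<Prod>n\<leftarrow>ns. real n powr -s) summable_on {ns. length ns = length ks \<and> set ns \<subseteq> UNIV}"
    by (intro summable_on_prod_list_lists) auto
  then have "(\<lambda>ns. \<Prod>n\<leftarrow>ns. real n powr -s) summable_on dec_tuples (length ks) 1"
    by (rule summable_on_subset) (auto simp: dec_tuples_def)
  then show ?thesis
    by (rule summable_on_comparison_test)
      (use zeta_term_le_powr_prod_dec_tuples[OF assms] in \<open>auto simp: s_def zeta_term_nonneg\<close>)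
qed

subsection \<open>Truncated zeta-star values of \<open>{p}\<^sup>m\<close>\<close>

definition bounded_dec_tuples :: "nat \<Rightarrow> nat \<Rightarrow> nat list set" where
  "bounded_dec_tuples m N = {ns \<in> dec_tuples m 1. \<forall>n\<in>set ns. n \<le> N}"

definition trunc_zeta_star :: "nat \<Rightarrow> nat \<Rightarrow> nat \<Rightarrow> real" where
  "trunc_zeta_star p m N = (\<Sum>ns\<in>bounded_dec_tuples m N. zeta_term (replicate m p) ns)"

lemma finite_bounded_dec_tuples: "finite (bounded_dec_tuples m N)"
proof (rule finite_subset)
  show "bounded_dec_tuples m N \<subseteq> {xs. set xs \<subseteq> {0..N} \<and> length xs = m}"
    by (auto simp: bounded_dec_tuples_def dec_tuples_def)
qed (simp add: finite_lists_length_eq)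

lemma bounded_dec_tuples_0: "bounded_dec_tuples 0 N = {[]}"
  by (auto simp: bounded_dec_tuples_def dec_tuples_def)

lemma bounded_dec_tuples_Suc:
  "bounded_dec_tuples (Suc m) N = (\<lambda>(n, ns). n # ns) ` (SIGMA n:{1..N}. bounded_dec_tuples m n)"
  by (fastforce simp: bounded_dec_tuples_def dec_tuples_def length_Suc_conv image_iff intro: le_trans)

lemma trunc_zeta_star_0 [simp]: "trunc_zeta_star p 0 N = 1"
  by (simp add: trunc_zeta_star_def bounded_dec_tuples_0)

lemma trunc_zeta_star_Suc:
  "trunc_zeta_star p (Suc m) N = (\<Sum>n=1..N. 1 / real n ^ p * trunc_zeta_star p m n)"
proof -
  have "inj_on (\<lambda>(n, ns). n # ns) (SIGMA n:{1..N}. bounded_dec_tuples m n)"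
    by (auto simp: inj_on_def)
  then have "trunc_zeta_star p (Suc m) N
      = (\<Sum>(n, ns)\<in>(SIGMA n:{1..N}. bounded_dec_tuples m n). 1 / real n ^ p * zeta_term (replicate m p) ns)"
    by (simp add: trunc_zeta_star_def bounded_dec_tuples_Suc sum.reindex case_prod_unfold)
  also have "\<dots> = (\<Sum>n=1..N. 1 / real n ^ p * trunc_zeta_star p m n)"
    by (simp add: sum.Sigma[symmetric] finite_bounded_dec_tuples trunc_zeta_star_def sum_distrib_left)
  finally show ?thesis .
qed

lemma trunc_zeta_star_Suc_Suc:
  "trunc_zeta_star p (Suc m) (Suc N) = trunc_zeta_star p (Suc m) N + 1 / real (Suc N) ^ p * trunc_zeta_star p m (Suc N)"
  by (simp add: trunc_zeta_star_Suc)

lemma trunc_zeta_star_1 [simp]: "trunc_zeta_star p m (Suc 0) = 1"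
  by (induction m) (simp_all add: trunc_zeta_star_Suc)

lemma trunc_zeta_star_nonneg: "0 \<le> trunc_zeta_star p m N"
  by (simp add: trunc_zeta_star_def sum_nonneg zeta_term_nonneg)

definition euler_prod :: "nat \<Rightarrow> nat \<Rightarrow> real" where
  "euler_prod p N = (\<Prod>l=2..N. real l ^ p / (real l ^ p - 1))"

lemma euler_prod_1 [simp]: "euler_prod p (Suc 0) = 1"
  by (simp add: euler_prod_def)

lemma euler_prod_Suc:
  "N \<ge> 1 \<Longrightarrow> euler_prod p (Suc N) = euler_prod p N * (real (Suc N) ^ p / (real (Suc N) ^ p - 1))"
  by (simp add: euler_prod_def)

lemma one_le_euler_prod:
  assumes "p \<ge> 1" shows "1 \<le> euler_prod p N"
  unfolding euler_prod_def
proof (rule prod_ge_1)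
  fix l assume "l \<in> {2..N}"
  then have "real l ^ p > 1" using assms by (intro one_less_power) auto
  then show "1 \<le> real l ^ p / (real l ^ p - 1)" by simp
qed

lemma euler_prod_le:
  assumes "p \<ge> 2" "N \<ge> 1" shows "euler_prod p N \<le> 2 * N / (N + 1)"
  using assms(2)
proof (induction N rule: nat_induct_at_least)
  case (Suc N)
  define n where "n = real N"
  have n: "n \<ge> 1" using Suc by (simp add: n_def)
  have "(n + 1) ^ 2 \<le> (n + 1) ^ p"
    using assms n by (intro power_increasing) auto
  moreover have "1 < (n + 1) ^ 2"
    using n by (intro one_less_power) auto
  ultimately have factor: "(n + 1) ^ p / ((n + 1) ^ p - 1) \<le> (n + 1) ^ 2 / ((n + 1) ^ 2 - 1)"
    by (simp add: field_simps)
  have "euler_prod p (Suc N) = euler_prod p N * ((n + 1) ^ p / ((n + 1) ^ p - 1))"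
    using Suc by (simp add: euler_prod_Suc n_def add.commute)
  also have "\<dots> \<le> 2 * n / (n + 1) * ((n + 1) ^ 2 / ((n + 1) ^ 2 - 1))"
    using Suc assms factor n
    by (intro mult_mono) (auto simp: n_def order_trans[OF zero_le_one one_le_euler_prod])
  also have "(n + 1) ^ 2 - 1 = n * (n + 2)"
    by (simp add: power2_eq_square algebra_simps)
  also have "2 * n / (n + 1) * ((n + 1) ^ 2 / (n * (n + 2))) = 2 * (n + 1) / (n + 1 + 1)"
  proof -
    have "n * (n + 2) \<noteq> 0" "n + 1 \<noteq> 0" "n + 1 + 1 \<noteq> 0" using n by auto
    then show ?thesis by (simp add: divide_simps power2_eq_square)
  qed
  finally show ?case by (simp add: n_def algebra_simps)
qed simp

lemma euler_prod_le_2: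
  assumes "p \<ge> 2" "N \<ge> 1" shows "euler_prod p N \<le> 2"
proof -
  have "2 * real N / (real N + 1) \<le> 2" by (simp add: divide_le_eq)
  then show ?thesis using euler_prod_le[OF assms] by linarith
qed

lemma trunc_zeta_star_le_euler_prod:
  assumes "p \<ge> 1" "N \<ge> 1" shows "trunc_zeta_star p m N \<le> euler_prod p N"
  using assms(2)
proof (induction N arbitrary: m rule: nat_induct_at_least)
  case (Suc N)
  define a where "a = real (Suc N) ^ p"
  have a: "a > 1" unfolding a_def using assms Suc.hyps by (intro one_less_power) auto
  have euler_prod_Suc_N: "euler_prod p (Suc N) = euler_prod p N * (a / (a - 1))"
    using Suc.hyps by (simp add: euler_prod_Suc a_def)
  show ?case
  proof (induction m)
    case 0
    show ?case using assms by (simp add: one_le_euler_prod)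
  next
    case (Suc m)
    have "trunc_zeta_star p (Suc m) (Suc N) = trunc_zeta_star p (Suc m) N + 1 / a * trunc_zeta_star p m (Suc N)"
      by (simp add: trunc_zeta_star_Suc_Suc a_def)
    also have "\<dots> \<le> euler_prod p N + 1 / a * euler_prod p (Suc N)"
      using Suc.IH \<open>\<And>m. trunc_zeta_star p m N \<le> euler_prod p N\<close> a by (intro add_mono mult_left_mono) auto
    also have "\<dots> = euler_prod p (Suc N)"
      using a unfolding euler_prod_Suc_N by (simp add: field_simps)
    finally show ?case .
  qed
qed simp

lemma trunc_zeta_star_le_Suc:
  assumes "N \<ge> 1" shows "trunc_zeta_star p m N \<le> trunc_zeta_star p (Suc m) N"
  using assms
proof (induction N arbitrary: m rule: nat_induct_at_least)
  case (Suc N)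
  show ?case
  proof (induction m)
    case 0
    show ?case
      using Suc.IH[of 0] by (simp add: trunc_zeta_star_Suc_Suc add_increasing2)
  next
    case (Suc m)
    then show ?case
      using \<open>\<And>m. trunc_zeta_star p m N \<le> trunc_zeta_star p (Suc m) N\<close>
      by (simp only: trunc_zeta_star_Suc_Suc[of p "Suc m"] trunc_zeta_star_Suc_Suc[of p m])
        (intro add_mono mult_left_mono; simp)
  qed
qed simp

lemma trunc_zeta_star_tendsto_euler_prod:
  assumes "p \<ge> 1" "N \<ge> 1" shows "(\<lambda>m. trunc_zeta_star p m N) \<longlonglongrightarrow> euler_prod p N"
  using assms(2)
proof (induction N rule: nat_induct_at_least)
  case (Suc N)
  define a where "a = real (Suc N) ^ p"
  have a: "a > 1" unfolding a_def using assms Suc.hyps by (intro one_less_power) auto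
  have "incseq (\<lambda>m. trunc_zeta_star p m (Suc N))"
    by (intro incseq_SucI trunc_zeta_star_le_Suc) simp
  moreover have "\<forall>m. trunc_zeta_star p m (Suc N) \<le> euler_prod p (Suc N)"
    using trunc_zeta_star_le_euler_prod[OF assms(1)] by simp
  ultimately obtain L where L: "(\<lambda>m. trunc_zeta_star p m (Suc N)) \<longlonglongrightarrow> L"
    using incseq_convergent by blast
  have "(\<lambda>m. trunc_zeta_star p (Suc m) (Suc N)) \<longlonglongrightarrow> L"
    using L by (rule LIMSEQ_Suc)
  moreover have "(\<lambda>m. trunc_zeta_star p (Suc m) (Suc N)) \<longlonglongrightarrow> euler_prod p N + 1 / a * L"
    unfolding trunc_zeta_star_Suc_Suc a_def[symmetric]
    by (intro tendsto_intros LIMSEQ_Suc[OF Suc.IH] L)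
  ultimately have "L = euler_prod p N + 1 / a * L"
    by (rule LIMSEQ_unique)
  then have "L = euler_prod p (Suc N)"
    using a Suc.hyps by (simp add: euler_prod_Suc a_def field_simps)
  then show ?case using L by simp
qed simp

subsection \<open>Splitting off the block \<open>{p}\<^sup>m\<close>\<close>

lemma dec_tuples_add_eq:
  assumes "r \<ge> 1"
  shows "dec_tuples (r + m) 1 = (\<lambda>(a, b). a @ b) ` (SIGMA a:dec_tuples r 1. bounded_dec_tuples m (last a))"
proof (intro equalityI subsetI)
  fix c assume c: "c \<in> dec_tuples (r + m) 1"
  define a where "a = take r c"
  define b where "b = drop r c"
  have c_eq: "c = a @ b" by (simp add: a_def b_def)
  have len: "length a = r" "length b = m"
    using c by (auto simp: a_def b_def dec_tuples_def)
  have sorted: "sorted_wrt (\<ge>) (a @ b)"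
    using c c_eq by (simp add: dec_tuples_def)
  have "last a \<in> set a"
    using len assms by (intro last_in_set) auto
  then have "\<forall>y\<in>set b. y \<le> last a"
    using sorted by (auto simp: sorted_wrt_append)
  then have "(a, b) \<in> (SIGMA a:dec_tuples r 1. bounded_dec_tuples m (last a))"
    using c sorted len unfolding c_eq by (auto simp: dec_tuples_def bounded_dec_tuples_def sorted_wrt_append)
  then show "c \<in> (\<lambda>(a, b). a @ b) ` (SIGMA a:dec_tuples r 1. bounded_dec_tuples m (last a))"
    unfolding c_eq by force
next
  fix c assume "c \<in> (\<lambda>(a, b). a @ b) ` (SIGMA a:dec_tuples r 1. bounded_dec_tuples m (last a))"
  then obtain a b where c: "c = a @ b" and a: "a \<in> dec_tuples r 1" and b: "b \<in> bounded_dec_tuples m (last a)"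
    by auto
  have "\<forall>x\<in>set a. \<forall>y\<in>set b. y \<le> x"
    using a b last_le_of_sorted_wrt_ge[of a] by (fastforce simp: bounded_dec_tuples_def dec_tuples_def)
  then show "c \<in> dec_tuples (r + m) 1"
    using a b c by (auto simp: dec_tuples_def bounded_dec_tuples_def sorted_wrt_append)
qed

lemma zeta_star_append_replicate:
  assumes "ks \<noteq> []" "hd ks \<ge> 2" "\<forall>k\<in>set ks. k \<ge> 1" "p \<ge> 1"
  shows "zeta_star (ks @ replicate m p)
    = (\<Sum>\<^sub>\<infinity>a\<in>dec_tuples (length ks) 1. zeta_term ks a * trunc_zeta_star p m (last a))"
proof -
  define S where "S = (SIGMA a:dec_tuples (length ks) 1. bounded_dec_tuples m (last a))"
  define f where "f = (\<lambda>(a, b). zeta_term ks a * zeta_term (replicate m p) b)"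
  have D: "dec_tuples (length (ks @ replicate m p)) 1 = (\<lambda>(a, b). a @ b) ` S"
    using dec_tuples_add_eq[of "length ks" m] assms(1) by (simp add: S_def Suc_le_eq)
  have inj: "inj_on (\<lambda>(a, b). a @ b) S"
    by (auto simp: inj_on_def S_def dec_tuples_def)
  have f_eq: "(zeta_term (ks @ replicate m p) \<circ> (\<lambda>(a, b). a @ b)) x = f x" if "x \<in> S" for x
    using that by (auto simp: f_def S_def dec_tuples_def zeta_term_append)
  have "zeta_term (ks @ replicate m p) summable_on (\<lambda>(a, b). a @ b) ` S"
    using summable_on_zeta_term[of "ks @ replicate m p"] assms unfolding D by (auto simp: set_replicate_conv_if)
  then have "(zeta_term (ks @ replicate m p) \<circ> (\<lambda>(a, b). a @ b)) summable_on S"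
    by (simp add: summable_on_reindex[OF inj])
  then have f_summable: "f summable_on S"
    by (rule summable_on_cong[THEN iffD1, rotated]) (rule f_eq)
  have "zeta_star (ks @ replicate m p) = infsum f S"
    unfolding zeta_star_def D infsum_reindex[OF inj] by (rule infsum_cong) (rule f_eq)
  also have "\<dots> = (\<Sum>\<^sub>\<infinity>a\<in>dec_tuples (length ks) 1. \<Sum>\<^sub>\<infinity>b\<in>bounded_dec_tuples m (last a). f (a, b))"
    using f_summable unfolding S_def by (rule infsum_Sigma_banach[symmetric])
  also have "\<dots> = (\<Sum>\<^sub>\<infinity>a\<in>dec_tuples (length ks) 1. zeta_term ks a * trunc_zeta_star p m (last a))"
    by (simp add: f_def finite_bounded_dec_tuples trunc_zeta_star_def sum_distrib_left)
  finally show ?thesis .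
qed

lemma zeta_star_append_replicate_tendsto:
  assumes "ks \<noteq> []" "hd ks \<ge> 2" "\<forall>k\<in>set ks. k \<ge> 1" "p \<ge> 2"
  shows "(\<lambda>m. zeta_star (ks @ replicate m p))
    \<longlonglongrightarrow> (\<Sum>\<^sub>\<infinity>a\<in>dec_tuples (length ks) 1. zeta_term ks a * euler_prod p (last a))"
proof -
  have last_ge_1: "last a \<ge> 1" if "a \<in> dec_tuples (length ks) 1" for a
    using that assms(1) by (intro last_dec_tuples_ge) (auto simp: Suc_le_eq)
  have "(\<lambda>m. \<Sum>\<^sub>\<infinity>a\<in>dec_tuples (length ks) 1. zeta_term ks a * trunc_zeta_star p m (last a))
    \<longlonglongrightarrow> (\<Sum>\<^sub>\<infinity>a\<in>dec_tuples (length ks) 1. zeta_term ks a * euler_prod p (last a))"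
  proof (rule tendsto_infsum_dominated[where g = "\<lambda>a. 2 * zeta_term ks a"])
    show "(\<lambda>a. 2 * zeta_term ks a) summable_on dec_tuples (length ks) 1"
      using summable_on_zeta_term[OF assms(1-3)] by (rule summable_on_cmult_right)
  next
    fix m a assume a: "a \<in> dec_tuples (length ks) 1"
    have "trunc_zeta_star p m (last a) \<le> 2"
      using trunc_zeta_star_le_euler_prod[of p "last a" m] euler_prod_le_2[of p "last a"] assms(4) last_ge_1[OF a]
      by simp
    then show "\<bar>zeta_term ks a * trunc_zeta_star p m (last a)\<bar> \<le> 2 * zeta_term ks a"
      using zeta_term_nonneg[of ks a] trunc_zeta_star_nonneg[of p m "last a"]
      by (simp add: abs_mult mult.commute mult_left_mono)
  next
    fix a assume a: "a \<in> dec_tuples (length ks) 1"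
    show "(\<lambda>m. zeta_term ks a * trunc_zeta_star p m (last a)) \<longlonglongrightarrow> zeta_term ks a * euler_prod p (last a)"
      using assms(4) last_ge_1[OF a] by (intro tendsto_mult_left trunc_zeta_star_tendsto_euler_prod) auto
  qed
  then show ?thesis
    using zeta_star_append_replicate[OF assms(1-3)] assms(4) by simp
qed

lemma dec_tuples_Suc_eq:
  "dec_tuples (Suc r) 1 = dec_tuples (Suc r) 2 \<union> (\<lambda>ns. ns @ [1]) ` dec_tuples r 1"
proof (intro equalityI subsetI)
  fix ns assume ns: "ns \<in> dec_tuples (Suc r) 1"
  then have sorted: "sorted_wrt (\<ge>) ns" and "ns \<noteq> []"
    by (auto simp: dec_tuples_def)
  show "ns \<in> dec_tuples (Suc r) 2 \<union> (\<lambda>ns. ns @ [1]) ` dec_tuples r 1"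
  proof (cases "last ns \<ge> 2")
    case True
    then show ?thesis
      using ns last_le_of_sorted_wrt_ge[OF sorted] by (force simp: dec_tuples_def)
  next
    case False
    then have "last ns = 1"
      using last_dec_tuples_ge[OF ns] by simp
    then have ns_eq: "ns = butlast ns @ [1]"
      using \<open>ns \<noteq> []\<close> by (metis append_butlast_last_id)
    then have "sorted_wrt (\<ge>) (butlast ns @ [1])" "length (butlast ns) = r" "\<forall>n\<in>set (butlast ns). 1 \<le> n"
      using ns sorted by (auto simp: dec_tuples_def dest: in_set_butlastD)
    then have "butlast ns \<in> dec_tuples r 1"
      by (simp add: dec_tuples_def sorted_wrt_append)
    then have "butlast ns @ [1] \<in> (\<lambda>ns. ns @ [1]) ` dec_tuples r 1"
      by (rule imageI)
    then show ?thesis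
      using ns_eq by simp
  qed
next
  fix ns assume "ns \<in> dec_tuples (Suc r) 2 \<union> (\<lambda>ns. ns @ [1]) ` dec_tuples r 1"
  then show "ns \<in> dec_tuples (Suc r) 1"
    by (auto simp: dec_tuples_def sorted_wrt_append)
qed

lemma infsum_zeta_term_euler_prod_eq:
  assumes "ks \<noteq> []" "hd ks \<ge> 2" "\<forall>k\<in>set ks. k \<ge> 1" "p \<ge> 2"
  shows "(\<Sum>\<^sub>\<infinity>a\<in>dec_tuples (length ks) 1. zeta_term ks a * euler_prod p (last a))
    = zeta_star (butlast ks) + (\<Sum>\<^sub>\<infinity>a\<in>dec_tuples (length ks) 2. zeta_term ks a * euler_prod p (last a))"
proof -
  define r where "r = length (butlast ks)"
  define h where "h = (\<lambda>a. zeta_term ks a * euler_prod p (last a))"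
  have len: "length ks = Suc r"
    using assms(1) by (simp add: r_def)
  obtain ks' k where ks_eq: "ks = ks' @ [k]"
    using assms(1) by (metis append_butlast_last_id)
  have "h summable_on dec_tuples (length ks) 1"
  proof (rule summable_on_comparison_test)
    show "(\<lambda>a. 2 * zeta_term ks a) summable_on dec_tuples (length ks) 1"
      using summable_on_zeta_term[OF assms(1-3)] by (rule summable_on_cmult_right)
    fix a assume "a \<in> dec_tuples (length ks) 1"
    then have "last a \<ge> 1"
      using len by (intro last_dec_tuples_ge) auto
    then show "h a \<le> 2 * zeta_term ks a" "0 \<le> h a"
      using euler_prod_le_2[of p "last a"] one_le_euler_prod[of p "last a"] assms(4) zeta_term_nonneg[of ks a]
      by (simp_all add: h_def mult.commute mult_left_mono)
  qed
  then have "h summable_on dec_tuples (Suc r) 2" "h summable_on (\<lambda>ns. ns @ [1]) ` dec_tuples r 1"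
    unfolding len dec_tuples_Suc_eq by (auto elim: summable_on_subset)
  moreover have "dec_tuples (Suc r) 2 \<inter> (\<lambda>ns. ns @ [1]) ` dec_tuples r 1 = {}"
    by (auto simp: dec_tuples_def)
  ultimately have "infsum h (dec_tuples (length ks) 1)
      = infsum h (dec_tuples (Suc r) 2) + infsum (h \<circ> (\<lambda>ns. ns @ [1])) (dec_tuples r 1)"
    unfolding len dec_tuples_Suc_eq by (simp add: infsum_Un_disjoint infsum_reindex inj_on_def)
  also have "infsum (h \<circ> (\<lambda>ns. ns @ [1])) (dec_tuples r 1) = zeta_star (butlast ks)"
    unfolding zeta_star_def r_def[symmetric]
  proof (rule infsum_cong)
    fix a assume "a \<in> dec_tuples r 1"
    then have "length a = length (butlast ks)"
      by (simp add: r_def dec_tuples_def)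
    then show "(h \<circ> (\<lambda>ns. ns @ [1])) a = zeta_term (butlast ks) a"
      by (simp add: h_def ks_eq zeta_term_append)
  qed
  finally show ?thesis
    by (simp add: h_def len)
qed

theorem proposition6p1:
  fixes ks :: "nat list" and p :: nat
  assumes "length ks \<ge> 1" and "p \<ge> 2" and "hd ks \<ge> 2"
    and "\<forall>k\<in>set ks. k \<ge> 1"
  shows "(\<lambda>m. zeta_star (ks @ replicate m p)) \<longlonglongrightarrow>
           zeta_star (butlast ks)
           + (\<Sum>\<^sub>\<infinity> ns \<in> dec_tuples (length ks) 2.
                zeta_term ks ns * (\<Prod>l=2..last ns. real l ^ p / (real l ^ p - 1)))"
proof -
  have "ks \<noteq> []"
    using assms(1) by auto
  from zeta_star_append_replicate_tendsto[OF this assms(3,4,2)]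
  show ?thesis
    unfolding infsum_zeta_term_euler_prod_eq[OF \<open>ks \<noteq> []\<close> assms(3,4,2)] unfolding euler_prod_def .
qed

end
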